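(* Let $\Omega\subset\mathbb{R}^d$ ($d=1,2$) be a rectangular domain with periodic boundary conditions, $\varepsilon>0$, $\tau>0$ a time step, and $(f,g)=\int_\Omega f\bar g\,d{\bf x}$. Let $b_i,a_{ij}$ ($i,j=1,\dots,s$) be real numbers satisfying \[ b_ia_{ij}+b_ja_{ji}=b_ib_j\quad\text{for all } i,j=1,\dots,s. \] Consider the semi-discrete $s$-stage Runge–Kutta scheme: given periodic functions $E^n$ (complex-valued) and $N^n,v^n,q^n$ (real-valued), the stage values satisfy, for $i=1,\dots,s$, \[ \begin{aligned} &E_{ni}=E^n+\tau\sum_{j=1}^s a_{ij}k_j^1,\quad k_i^1={\rm i}\big(\Delta E_{ni}-\varepsilon^2\Delta^2E_{ni}-N_{ni}E_{ni}\big),\\ &N_{ni}=N^n+\tau\sum_{j=1}^s a_{ij}k_j^2,\quad k_i^2=\Delta v_{ni},\\ &v_{ni}=v^n+\tau\sum_{j=1}^s a_{ij}k_j^3,\quad k_i^3=N_{ni}-\varepsilon^2\Delta N_{ni}+Q_{ni},\\ &Q_{ni}=q^n+\tau\sum_{j=1}^s a_{ij}k_j^4,\quad k_i^4=2\,{\rm Re}\big(\bar E_{ni}\,k_i^1\big), \end{aligned} \] and the update is $E^{n+1}=E^n+\tau\sum_i b_ik_i^1$, $N^{n+1}=N^n+\tau\sum_i b_ik_i^2$, $v^{n+1}=v^n+\tau\sum_i b_ik_i^3$, $q^{n+1}=q^n+\tau\sum_i b_ik_i^4$, with initial data satisfying $q^0=|E^0|^2$. Assume the stage equations are solvable at every step.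 Then for all $n\ge0$: (i) $\mathcal{M}^{n+1}=\mathcal{M}^n$, where $\mathcal{M}^n=(|E^n|^2,1)$; (ii) $q^n-|E^n|^2=0$; (iii) $\mathcal{E}^{n+1}=\mathcal{E}^n$, where \[ \mathcal{E}^n=(\Delta E^n,E^n)-\varepsilon^2(\Delta E^n,\Delta E^n)-\tfrac12(N^n,N^n)+\tfrac{\varepsilon^2}{2}(\Delta N^n,N^n)-(N^n,q^n)+\tfrac12(\Delta v^n,v^n). \]
   Context: This is the Runge–Kutta time discretization of the system $E_t={\rm i}(\Delta E-\varepsilon^2\Delta^2E-NE)$, $N_t=\Delta v$, $v_t=N-\varepsilon^2\Delta N+q$, $q_t=2{\rm Re}(E_t\bar E)$ (a reformulation of the quantum Zakharov system with $q=|E|^2$). The condition on $b_i,a_{ij}$ is the symplecticity condition for Runge–Kutta methods (satisfied e.g. by Gauss methods). *)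

theory Defs
  imports "HOL-Analysis.Analysis"
begin

definition pd :: "'n::finite \<Rightarrow> (real^'n \<Rightarrow> 'b::real_normed_vector) \<Rightarrow> real^'n \<Rightarrow> 'b" where
  "pd k f x = vector_derivative (\<lambda>t. f (x + t *\<^sub>R axis k 1)) (at 0)"

definition lap :: "(real^'n::finite \<Rightarrow> 'b::real_normed_vector) \<Rightarrow> real^'n \<Rightarrow> 'b" where
  "lap f = (\<lambda>x. \<Sum>k\<in>UNIV. pd k (pd k f) x)"

fun iter_pd :: "'n::finite list \<Rightarrow> (real^'n \<Rightarrow> 'b::real_normed_vector) \<Rightarrow> real^'n \<Rightarrow> 'b" where
  "iter_pd [] f = f"
| "iter_pd (k # ks) f = pd k (iter_pd ks f)"

definition smooth_fn :: "(real^'n::finite \<Rightarrow> 'b::real_normed_vector) \<Rightarrow> bool" where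
  "smooth_fn f \<longleftrightarrow> (\<forall>ks. continuous_on UNIV (iter_pd ks f) \<and>
      (\<forall>k x. (\<lambda>t. iter_pd ks f (x + t *\<^sub>R axis k 1)) differentiable (at 0)))"

definition periodic_fn :: "real^'n::finite \<Rightarrow> (real^'n \<Rightarrow> 'b) \<Rightarrow> bool" where
  "periodic_fn L f \<longleftrightarrow> (\<forall>k x. f (x + (L$k) *\<^sub>R axis k 1) = f x)"

definition admissible :: "real^'n::finite \<Rightarrow> (real^'n \<Rightarrow> 'b::real_normed_vector) \<Rightarrow> bool" where
  "admissible L f \<longleftrightarrow> smooth_fn f \<and> periodic_fn L f"

definition ipc :: "real^'n::finite \<Rightarrow> (real^'n \<Rightarrow> complex) \<Rightarrow> (real^'n \<Rightarrow> complex) \<Rightarrow> complex" where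
  "ipc L f g = integral (cbox 0 L) (\<lambda>x. f x * cnj (g x))"

definition ipr :: "real^'n::finite \<Rightarrow> (real^'n \<Rightarrow> real) \<Rightarrow> (real^'n \<Rightarrow> real) \<Rightarrow> real" where
  "ipr L f g = integral (cbox 0 L) (\<lambda>x. f x * g x)"

definition K1 :: "real \<Rightarrow> (real^'n::finite \<Rightarrow> complex) \<Rightarrow> (real^'n \<Rightarrow> real) \<Rightarrow> real^'n \<Rightarrow> complex" where
  "K1 \<epsilon> E N = (\<lambda>x. \<i> * (lap E x - complex_of_real (\<epsilon>^2) * lap (lap E) x - complex_of_real (N x) * E x))"

definition K2 :: "(real^'n::finite \<Rightarrow> real) \<Rightarrow> real^'n \<Rightarrow> real" where
  "K2 v = lap v"

definition K3 :: "real \<Rightarrow> (real^'n::finite \<Rightarrow> real) \<Rightarrow> (real^'n \<Rightarrow> real) \<Rightarrow> real^'n \<Rightarrow> real" where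
  "K3 \<epsilon> N Q = (\<lambda>x. N x - \<epsilon>^2 * lap N x + Q x)"

definition K4 :: "real \<Rightarrow> (real^'n::finite \<Rightarrow> complex) \<Rightarrow> (real^'n \<Rightarrow> real) \<Rightarrow> real^'n \<Rightarrow> real" where
  "K4 \<epsilon> E N = (\<lambda>x. 2 * Re (cnj (E x) * K1 \<epsilon> E N x))"

definition mass :: "real^'n::finite \<Rightarrow> (real^'n \<Rightarrow> complex) \<Rightarrow> complex" where
  "mass L E = ipc L (\<lambda>x. complex_of_real ((cmod (E x))^2)) (\<lambda>x. 1)"

definition energy :: "real \<Rightarrow> real^'n::finite \<Rightarrow> (real^'n \<Rightarrow> complex) \<Rightarrow> (real^'n \<Rightarrow> real)
    \<Rightarrow> (real^'n \<Rightarrow> real) \<Rightarrow> (real^'n \<Rightarrow> real) \<Rightarrow> complex" where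
  "energy \<epsilon> L E N v q =
     ipc L (lap E) E - complex_of_real (\<epsilon>^2) * ipc L (lap E) (lap E)
     - complex_of_real (1/2 * ipr L N N) + complex_of_real (\<epsilon>^2/2 * ipr L (lap N) N)
     - complex_of_real (ipr L N q) + complex_of_real (1/2 * ipr L (lap v) v)"

end

theory Submission
  imports Defs
begin

text \<open>Each invariant is built from real-bilinear forms \<open>B(y, z)\<close>: the pointwise product \<open>Re (E conj E)\<close>
  and \<open>L\<^sup>2\<close> products, possibly with Laplacians applied to the arguments. For a Runge--Kutta method with
  \<open>b\<^sub>i a\<^sub>i\<^sub>j + b\<^sub>j a\<^sub>j\<^sub>i = b\<^sub>i b\<^sub>j\<close>, expanding the update shows that \<open>B(y, z)\<close> changes by exactly
  \<open>\<tau> \<Sum>\<^sub>i b\<^sub>i (B(Y\<^sub>i, l\<^sub>i) + B(k\<^sub>i, Z\<^sub>i))\<close>: the \<open>\<tau>\<^sup>2\<close> terms cancel by the symplecticity condition.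
  Hence every invariant changes by \<open>\<tau> \<Sum>\<^sub>i b\<^sub>i\<close> times its rate of change along the continuous flow,
  evaluated at stage \<open>i\<close>, and these rates vanish: for \<open>q - |E|\<^sup>2\<close> because \<open>k\<^sup>4\<close> is \<open>2 Re (conj E k\<^sup>1)\<close>;
  for the mass and the energy after integrating by parts over the periodic cell, which makes \<open>\<Delta>\<close>
  self-adjoint, and the energy rate splits into two cancelling terms \<open>\<plusminus>(N, k\<^sup>4)\<close>.\<close>

section \<open>Partial derivatives and smooth functions\<close>

definition pd_differentiable :: "'n::finite \<Rightarrow> (real^'n \<Rightarrow> 'b::real_normed_vector) \<Rightarrow> real^'n \<Rightarrow> bool" where
  "pd_differentiable k f x \<longleftrightarrow> (\<lambda>t. f (x + t *\<^sub>R axis k 1)) differentiable (at 0)"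

lemma has_vector_derivative_pd:
  "pd_differentiable k f x \<Longrightarrow> ((\<lambda>t. f (x + t *\<^sub>R axis k 1)) has_vector_derivative pd k f x) (at 0)"
  unfolding pd_differentiable_def pd_def by (simp add: vector_derivative_works)

lemma pd_eqI: "((\<lambda>t. f (x + t *\<^sub>R axis k 1)) has_vector_derivative D) (at 0) \<Longrightarrow> pd k f x = D"
  unfolding pd_def by (rule vector_derivative_at)

lemma pd_differentiableI:
  "((\<lambda>t. f (x + t *\<^sub>R axis k 1)) has_vector_derivative D) (at 0) \<Longrightarrow> pd_differentiable k f x"
  unfolding pd_differentiable_def by (rule differentiableI_vector)

lemma pd_add:
  assumes "pd_differentiable k f x" "pd_differentiable k g x"
  shows "pd k (\<lambda>y. f y + g y) x = pd k f x + pd k g x"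
    and "pd_differentiable k (\<lambda>y. f y + g y) x"
  using has_vector_derivative_add[OF assms[THEN has_vector_derivative_pd]]
  by (auto intro: pd_eqI pd_differentiableI)

lemma pd_linear:
  assumes "bounded_linear \<phi>" "pd_differentiable k f x"
  shows "pd k (\<lambda>y. \<phi> (f y)) x = \<phi> (pd k f x)"
    and "pd_differentiable k (\<lambda>y. \<phi> (f y)) x"
  using bounded_linear.has_vector_derivative[OF assms(1) has_vector_derivative_pd[OF assms(2)]]
  by (auto intro: pd_eqI pd_differentiableI)

lemma pd_mult:
  fixes f g :: "real^'n::finite \<Rightarrow> 'b::real_normed_algebra"
  assumes "pd_differentiable k f x" "pd_differentiable k g x"
  shows "pd k (\<lambda>y. f y * g y) x = f x * pd k g x + pd k f x * g x"
    and "pd_differentiable k (\<lambda>y. f y * g y) x"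
  using has_vector_derivative_mult[OF assms[THEN has_vector_derivative_pd]]
  by (auto intro: pd_eqI pd_differentiableI)

lemma pd_const: "pd k (\<lambda>y. c) x = 0" "pd_differentiable k (\<lambda>y. c) x"
  by (auto intro: pd_eqI simp: pd_differentiable_def)

lemma smooth_fn_iff:
  "smooth_fn f \<longleftrightarrow> (\<forall>ks. continuous_on UNIV (iter_pd ks f) \<and> (\<forall>k x. pd_differentiable k (iter_pd ks f) x))"
  unfolding smooth_fn_def pd_differentiable_def ..

lemma smooth_fn_continuous_iter_pd: "smooth_fn f \<Longrightarrow> continuous_on UNIV (iter_pd ks f)"
  unfolding smooth_fn_iff by blast

lemma smooth_fn_pd_differentiable_iter_pd: "smooth_fn f \<Longrightarrow> pd_differentiable k (iter_pd ks f) x"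
  unfolding smooth_fn_iff by blast

lemma smooth_fn_continuous: "smooth_fn f \<Longrightarrow> continuous_on UNIV f"
  using smooth_fn_continuous_iter_pd[where ks="[]"] by simp

lemma smooth_fn_pd_differentiable: "smooth_fn f \<Longrightarrow> pd_differentiable k f x"
  using smooth_fn_pd_differentiable_iter_pd[where ks="[]"] by simp

lemma smooth_fnI:
  "(\<And>ks. continuous_on UNIV (iter_pd ks f)) \<Longrightarrow> (\<And>ks k x. pd_differentiable k (iter_pd ks f) x)
    \<Longrightarrow> smooth_fn f"
  unfolding smooth_fn_iff by blast

lemma iter_pd_add:
  assumes "smooth_fn f" "smooth_fn g"
  shows "iter_pd ks (\<lambda>x. f x + g x) = (\<lambda>x. iter_pd ks f x + iter_pd ks g x)"
  by (induction ks) (simp_all add: pd_add(1) assms[THEN smooth_fn_pd_differentiable_iter_pd])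

lemma smooth_fn_add: "smooth_fn f \<Longrightarrow> smooth_fn g \<Longrightarrow> smooth_fn (\<lambda>x. f x + g x)"
  by (intro smooth_fnI)
    (simp_all add: iter_pd_add continuous_on_add smooth_fn_continuous_iter_pd pd_add(2)
      smooth_fn_pd_differentiable_iter_pd)

lemma iter_pd_linear:
  assumes "bounded_linear \<phi>" "smooth_fn f"
  shows "iter_pd ks (\<lambda>x. \<phi> (f x)) = (\<lambda>x. \<phi> (iter_pd ks f x))"
  by (induction ks) (simp_all add: pd_linear(1)[OF assms(1)] smooth_fn_pd_differentiable_iter_pd[OF assms(2)])

lemma smooth_fn_linear: "bounded_linear \<phi> \<Longrightarrow> smooth_fn f \<Longrightarrow> smooth_fn (\<lambda>x. \<phi> (f x))"
  by (intro smooth_fnI)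
    (simp_all add: iter_pd_linear bounded_linear.continuous_on smooth_fn_continuous_iter_pd
      pd_linear(2) smooth_fn_pd_differentiable_iter_pd)

lemma smooth_fn_pd:
  assumes "smooth_fn f"
  shows "smooth_fn (pd k f)"
proof -
  have "iter_pd ks (pd k f) = iter_pd (ks @ [k]) f" for ks
    by (induction ks) auto
  then show ?thesis
    using assms by (simp add: smooth_fnI smooth_fn_continuous_iter_pd smooth_fn_pd_differentiable_iter_pd)
qed

lemma smooth_fn_const: "smooth_fn (\<lambda>x. c)"
proof -
  have iter_pd_const: "iter_pd ks (\<lambda>x. c) = (if ks = [] then (\<lambda>x. c) else (\<lambda>x. 0))" for ks
    by (induction ks) (auto simp: pd_const)
  show ?thesis
    by (intro smooth_fnI) (auto simp: iter_pd_const pd_const)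
qed

text \<open>By the Leibniz rule, every iterated partial derivative of \<open>f * g\<close> is a finite sum of
  products of iterated partial derivatives of \<open>f\<close> and of \<open>g\<close>.\<close>

inductive_set leibniz_terms :: "(real^'n::finite \<Rightarrow> 'b::real_normed_algebra) \<Rightarrow> (real^'n \<Rightarrow> 'b)
    \<Rightarrow> (real^'n \<Rightarrow> 'b) set"
  for f g where
  product: "(\<lambda>x. iter_pd ks f x * iter_pd ls g x) \<in> leibniz_terms f g"
| add: "h1 \<in> leibniz_terms f g \<Longrightarrow> h2 \<in> leibniz_terms f g \<Longrightarrow> (\<lambda>x. h1 x + h2 x) \<in> leibniz_terms f g"

lemma leibniz_terms_closed:
  assumes f: "smooth_fn f" and g: "smooth_fn g" and h: "h \<in> leibniz_terms f g"
  shows "continuous_on UNIV h \<and> (\<forall>k x. pd_differentiable k h x) \<and> (\<forall>k. pd k h \<in> leibniz_terms f g)"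
  using h
proof induction
  case (product ks ls)
  have "pd k (\<lambda>x. iter_pd ks f x * iter_pd ls g x) =
      (\<lambda>x. iter_pd ks f x * iter_pd (k # ls) g x + iter_pd (k # ks) f x * iter_pd ls g x)" for k
    by (rule ext) (simp add: pd_mult(1) smooth_fn_pd_differentiable_iter_pd f g)
  then show ?case
    using leibniz_terms.product[of ks f "k # ls" g for k] leibniz_terms.product[of "k # ks" f ls g for k]
    by (auto intro!: continuous_on_mult smooth_fn_continuous_iter_pd pd_mult(2)
        smooth_fn_pd_differentiable_iter_pd f g leibniz_terms.add)
next
  case (add h1 h2)
  have "pd k (\<lambda>x. h1 x + h2 x) = (\<lambda>x. pd k h1 x + pd k h2 x)" for k
    using add by (intro ext pd_add(1)) auto
  then show ?case
    using add by (auto intro: continuous_on_add pd_add(2) leibniz_terms.add)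
qed

lemma smooth_fn_mult:
  fixes f g :: "real^'n::finite \<Rightarrow> 'b::real_normed_algebra"
  assumes f: "smooth_fn f" and g: "smooth_fn g"
  shows "smooth_fn (\<lambda>x. f x * g x)"
proof -
  have "iter_pd ks (\<lambda>x. f x * g x) \<in> leibniz_terms f g" for ks
  proof (induction ks)
    case Nil
    show ?case using leibniz_terms.product[of "[]" f "[]" g] by simp
  next
    case (Cons k ks)
    then show ?case using leibniz_terms_closed[OF f g Cons] by simp
  qed
  then show ?thesis
    using leibniz_terms_closed[OF f g] by (auto intro: smooth_fnI)
qed

section \<open>Integrals of periodic functions\<close>

lemma periodic_fn_pd:
  assumes "periodic_fn L f"
  shows "periodic_fn L (pd k f)"
  unfolding periodic_fn_def
proof (intro allI)
  fix j x
  have "f (x + (L$j) *\<^sub>R axis j 1 + t *\<^sub>R axis k 1) = f (x + t *\<^sub>R axis k 1)" for t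
    using assms unfolding periodic_fn_def by (metis add.assoc add.commute)
  then show "pd k f (x + (L$j) *\<^sub>R axis j 1) = pd k f x"
    unfolding pd_def by simp
qed

lemma integrable_on_cbox_if_continuous:
  "continuous_on UNIV f \<Longrightarrow> (f::real^'n::finite \<Rightarrow> 'b::banach) integrable_on cbox a b"
  by (rule integrable_continuous, erule continuous_on_subset, simp)

lemma integral_translate_cbox:
  "integral (cbox a b) (\<lambda>x. g (x + c)) = integral (cbox (a + c) (b + c)) g"
  using integral_shift_cbox_plus[of a b g c] by (simp add: o_def add.commute)

text \<open>Shifting a period cell in direction \<open>k\<close> by \<open>t\<close>: the slab cut off at one end reappears,
  translated by one period, at the other end.\<close>

lemma integral_periodic_shift:
  fixes g :: "real^'n::finite \<Rightarrow> 'b::banach" and L :: "real^'n"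
  assumes g: "continuous_on UNIV g" and per: "\<And>x. g (x + (L$k) *\<^sub>R axis k 1) = g x"
    and t: "0 \<le> t" "t \<le> L$k"
  shows "integral (cbox 0 L) (\<lambda>x. g (x + t *\<^sub>R axis k 1)) = integral (cbox 0 L) g"
proof -
  define e :: "real^'n" where "e = axis k 1"
  define Lt :: "real^'n" where "Lt = (\<chi> i. if i = k then t else L$i)"
  have e: "e \<in> Basis" unfolding e_def by (simp add: axis_in_Basis_iff)
  have inner_e: "x \<bullet> e = x $ k" for x :: "real^'n"
    unfolding e_def by (simp add: inner_axis)
  have int: "g integrable_on cbox a b" for a b
    by (rule integrable_on_cbox_if_continuous[OF g])
  note split = interval_split_cart[unfolded interval_cbox_cart]
  have "integral (cbox 0 L) (\<lambda>x. g (x + t *\<^sub>R e)) = integral (cbox (t *\<^sub>R e) (L + t *\<^sub>R e)) g"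
    using integral_translate_cbox[of 0 L g "t *\<^sub>R e"] by simp
  also have "\<dots> = integral (cbox (t *\<^sub>R e) (L + t *\<^sub>R e) \<inter> {x. x \<bullet> e \<le> L$k}) g
      + integral (cbox (t *\<^sub>R e) (L + t *\<^sub>R e) \<inter> {x. x \<bullet> e \<ge> L$k}) g"
    by (rule integral_split[OF int e])
  also have "cbox (t *\<^sub>R e) (L + t *\<^sub>R e) \<inter> {x. x \<bullet> e \<le> L$k} = cbox (t *\<^sub>R e) L"
    unfolding inner_e split
    using t by (intro arg_cong2[where f=cbox]) (auto simp: e_def vec_eq_iff axis_def)
  also have "cbox (t *\<^sub>R e) (L + t *\<^sub>R e) \<inter> {x. x \<bullet> e \<ge> L$k} = cbox (0 + (L$k) *\<^sub>R e) (Lt + (L$k) *\<^sub>R e)"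
    unfolding inner_e split
    using t by (intro arg_cong2[where f=cbox]) (auto simp: e_def Lt_def vec_eq_iff axis_def)
  also have "integral (cbox (0 + (L$k) *\<^sub>R e) (Lt + (L$k) *\<^sub>R e)) g = integral (cbox 0 Lt) g"
    using integral_translate_cbox[of 0 Lt g "(L$k) *\<^sub>R e"] per by (simp add: e_def)
  also have "integral (cbox (t *\<^sub>R e) L) g + integral (cbox 0 Lt) g
      = integral (cbox 0 L \<inter> {x. x \<bullet> e \<le> t}) g + integral (cbox 0 L \<inter> {x. x \<bullet> e \<ge> t}) g"
  proof -
    have "cbox 0 L \<inter> {x. x \<bullet> e \<le> t} = cbox 0 Lt" "cbox 0 L \<inter> {x. x \<bullet> e \<ge> t} = cbox (t *\<^sub>R e) L"
      unfolding inner_e split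
      using t by (auto intro!: arg_cong2[where f=cbox] simp: e_def Lt_def vec_eq_iff axis_def)
    then show ?thesis by simp
  qed
  also have "\<dots> = integral (cbox 0 L) g"
    by (rule integral_split[OF int e, symmetric])
  finally show ?thesis unfolding e_def .
qed

lemma has_vector_derivative_pd_shift:
  assumes "pd_differentiable k h (x + t *\<^sub>R axis k 1)"
  shows "((\<lambda>s. h (x + s *\<^sub>R axis k 1)) has_vector_derivative pd k h (x + t *\<^sub>R axis k 1)) (at t)"
proof -
  have "((\<lambda>s. s - t) has_vector_derivative 1) (at t)"
    by (auto intro!: derivative_eq_intros)
  moreover have "((\<lambda>u. h ((x + t *\<^sub>R axis k 1) + u *\<^sub>R axis k 1)) has_vector_derivative
      pd k h (x + t *\<^sub>R axis k 1)) (at ((\<lambda>s. s - t) t))"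
    using has_vector_derivative_pd[OF assms] by simp
  moreover have "(\<lambda>u. h ((x + t *\<^sub>R axis k 1) + u *\<^sub>R axis k 1)) \<circ> (\<lambda>s. s - t) = (\<lambda>s. h (x + s *\<^sub>R axis k 1))"
    by (rule ext) (simp add: algebra_simps)
  ultimately show ?thesis
    using vector_diff_chain_at by fastforce
qed

text \<open>The integral of \<open>h\<close> over the shifted cell \<open>[0,L] + t e\<^sub>k\<close> is independent of \<open>t\<close>;
  differentiating under the integral sign at an interior \<open>t\<close> gives the claim.\<close>

lemma integral_pd_periodic_eq_0:
  fixes h :: "real^'n::finite \<Rightarrow> 'b::banach" and L :: "real^'n"
  assumes h: "continuous_on UNIV h" and pd_h: "continuous_on UNIV (pd k h)"
    and diff: "\<And>x. pd_differentiable k h x" and per: "periodic_fn L h" and L_pos: "L$k > 0"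
  shows "integral (cbox 0 L) (pd k h) = 0"
proof -
  define e :: "real^'n" where "e = axis k 1"
  define \<phi> where "\<phi> t = integral (cbox 0 L) (\<lambda>x. h (x + t *\<^sub>R e))" for t
  define U where "U = {0<..<L$k}"
  define t0 where "t0 = L$k / 2"
  have t0: "t0 \<in> U" "open U" using L_pos by (simp_all add: U_def t0_def)
  have "(\<phi> has_vector_derivative integral (cbox 0 L) (\<lambda>x. pd k h (x + t0 *\<^sub>R e))) (at t0 within U)"
    unfolding \<phi>_def
  proof (rule leibniz_rule_vector_derivative[where fx="\<lambda>t x. pd k h (x + t *\<^sub>R e)"])
    show "((\<lambda>t. h (x + t *\<^sub>R e)) has_vector_derivative pd k h (x + t *\<^sub>R e)) (at t within U)" for t x
      unfolding e_def by (rule has_vector_derivative_at_within, intro has_vector_derivative_pd_shift diff)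
    show "(\<lambda>x. h (x + t *\<^sub>R e)) integrable_on cbox 0 L" for t
      by (intro integrable_on_cbox_if_continuous continuous_on_compose2[OF h]) (auto intro!: continuous_intros)
    have "continuous_on (U \<times> cbox 0 L) (\<lambda>p. pd k h (snd p + fst p *\<^sub>R e))"
      by (rule continuous_on_compose2[OF pd_h]) (auto intro!: continuous_intros)
    then show "continuous_on (U \<times> cbox 0 L) (\<lambda>(t, x). pd k h (x + t *\<^sub>R e))"
      by (simp add: case_prod_beta)
    show "t0 \<in> U" "convex U"
      using t0 by (simp_all add: U_def)
  qed
  then have "(\<phi> has_vector_derivative integral (cbox 0 L) (\<lambda>x. pd k h (x + t0 *\<^sub>R e))) (at t0)"
    using has_vector_derivative_within_open[OF t0] by blast
  moreover have "(\<phi> has_vector_derivative 0) (at t0)"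
  proof (rule has_vector_derivative_transform_within_open[OF has_vector_derivative_const t0(2,1)])
    show "integral (cbox 0 L) h = \<phi> t" if "t \<in> U" for t
      using that per unfolding \<phi>_def e_def periodic_fn_def
      by (intro integral_periodic_shift[OF h, symmetric]) (auto simp: U_def)
  qed
  ultimately have "integral (cbox 0 L) (\<lambda>x. pd k h (x + t0 *\<^sub>R e)) = 0"
    by (rule vector_derivative_unique_at)
  moreover have "integral (cbox 0 L) (\<lambda>x. pd k h (x + t0 *\<^sub>R e)) = integral (cbox 0 L) (pd k h)"
    using t0 periodic_fn_pd[OF per] unfolding e_def periodic_fn_def
    by (intro integral_periodic_shift[OF pd_h]) (auto simp: U_def)
  ultimately show ?thesis by simp
qed

lemma admissible_smooth_fn: "admissible L f \<Longrightarrow> smooth_fn f"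
  unfolding admissible_def by blast

lemma admissible_periodic_fn: "admissible L f \<Longrightarrow> periodic_fn L f"
  unfolding admissible_def by blast

lemma admissible_continuous: "admissible L f \<Longrightarrow> continuous_on UNIV f"
  by (rule smooth_fn_continuous[OF admissible_smooth_fn])

lemma admissible_add: "admissible L f \<Longrightarrow> admissible L g \<Longrightarrow> admissible L (\<lambda>x. f x + g x)"
  unfolding admissible_def periodic_fn_def by (auto intro: smooth_fn_add)

lemma admissible_linear: "bounded_linear \<phi> \<Longrightarrow> admissible L f \<Longrightarrow> admissible L (\<lambda>x. \<phi> (f x))"
  unfolding admissible_def periodic_fn_def by (auto intro: smooth_fn_linear)

lemma admissible_mult:
  fixes f g :: "real^'n::finite \<Rightarrow> 'b::real_normed_algebra"
  shows "admissible L f \<Longrightarrow> admissible L g \<Longrightarrow> admissible L (\<lambda>x. f x * g x)"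
  unfolding admissible_def periodic_fn_def by (auto intro: smooth_fn_mult)

lemma admissible_const: "admissible L (\<lambda>x. c)"
  unfolding admissible_def periodic_fn_def by (auto intro: smooth_fn_const)

lemma admissible_pd: "admissible L f \<Longrightarrow> admissible L (pd k f)"
  unfolding admissible_def by (auto intro: smooth_fn_pd periodic_fn_pd)

lemma admissible_sum:
  "finite A \<Longrightarrow> (\<And>i. i \<in> A \<Longrightarrow> admissible L (f i)) \<Longrightarrow> admissible L (\<lambda>x. \<Sum>i\<in>A. f i x)"
  by (induction A rule: finite_induct) (auto intro: admissible_add admissible_const)

lemma admissible_lap: "admissible L f \<Longrightarrow> admissible L (lap f)"
  unfolding lap_def by (intro admissible_sum admissible_pd) auto

lemma admissible_diff: "admissible L f \<Longrightarrow> admissible L g \<Longrightarrow> admissible L (\<lambda>x. f x - g x)"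
  using admissible_add[OF _ admissible_linear[OF bounded_linear_minus[OF bounded_linear_ident]], of L f g]
  by simp

lemma admissible_cmult:
  fixes f :: "real^'n::finite \<Rightarrow> 'b::real_normed_algebra"
  shows "admissible L f \<Longrightarrow> admissible L (\<lambda>x. c * f x)"
  by (rule admissible_linear[OF bounded_linear_mult_right])

lemma admissible_scaleR: "admissible L f \<Longrightarrow> admissible L (\<lambda>x. c *\<^sub>R f x)"
  by (rule admissible_linear[OF bounded_linear_scaleR_right])

lemma admissible_cnj: "admissible L f \<Longrightarrow> admissible L (\<lambda>x. cnj (f x))"
  by (rule admissible_linear[OF bounded_linear_cnj])

lemma admissible_of_real: "admissible L f \<Longrightarrow> admissible L (\<lambda>x. of_real (f x) :: complex)"
  by (rule admissible_linear[OF bounded_linear_of_real])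

lemma lap_add:
  "admissible L f \<Longrightarrow> admissible L g \<Longrightarrow> lap (\<lambda>x. f x + g x) = (\<lambda>x. lap f x + lap g x)"
  unfolding lap_def
  using iter_pd_add[OF admissible_smooth_fn admissible_smooth_fn, of L f L g "[k, k]" for k]
  by (simp add: sum.distrib fun_eq_iff)

lemma lap_linear:
  assumes "bounded_linear \<phi>" "admissible L f"
  shows "lap (\<lambda>x. \<phi> (f x)) = (\<lambda>x. \<phi> (lap f x))"
  unfolding lap_def
  using iter_pd_linear[OF assms(1) admissible_smooth_fn[OF assms(2)], of "[k, k]" for k]
  by (simp add: fun_eq_iff o_def linear_sum[OF bounded_linear.linear[OF assms(1)]])

lemma lap_scaleR: "admissible L f \<Longrightarrow> lap (\<lambda>x. c *\<^sub>R f x) = (\<lambda>x. c *\<^sub>R lap f x)"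
  by (rule lap_linear[OF bounded_linear_scaleR_right])

lemma lap_cnj: "admissible L f \<Longrightarrow> lap (\<lambda>x. cnj (f x)) = (\<lambda>x. cnj (lap f x))"
  by (rule lap_linear[OF bounded_linear_cnj])

text \<open>Periodicity kills the boundary terms of the integration by parts.\<close>

lemma integral_pd_mult_periodic:
  fixes f g :: "real^'n::finite \<Rightarrow> 'b::{real_normed_field,banach}"
  assumes f: "admissible L f" and g: "admissible L g" and L_pos: "L$k > 0"
  shows "integral (cbox 0 L) (\<lambda>x. pd k f x * g x) = - integral (cbox 0 L) (\<lambda>x. f x * pd k g x)"
proof -
  define h where "h = (\<lambda>x. f x * g x)"
  have h: "admissible L h"
    unfolding h_def by (rule admissible_mult[OF f g])
  have "pd k h = (\<lambda>x. f x * pd k g x + pd k f x * g x)"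
    unfolding h_def
    by (rule ext, rule pd_mult(1)) (auto intro: smooth_fn_pd_differentiable admissible_smooth_fn f g)
  moreover have "integral (cbox 0 L) (pd k h) = 0"
    using h L_pos
    by (intro integral_pd_periodic_eq_0)
      (auto intro: admissible_continuous admissible_pd smooth_fn_pd_differentiable admissible_smooth_fn
        admissible_periodic_fn)
  ultimately have "integral (cbox 0 L) (\<lambda>x. f x * pd k g x) + integral (cbox 0 L) (\<lambda>x. pd k f x * g x) = 0"
    by (subst integral_add[symmetric])
      (auto intro!: integrable_on_cbox_if_continuous admissible_continuous admissible_mult admissible_pd f g)
  then show ?thesis
    by (simp add: eq_neg_iff_add_eq_0 add.commute)
qed

lemma integral_lap_mult_periodic:
  fixes f g :: "real^'n::finite \<Rightarrow> 'b::{real_normed_field,banach}"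
  assumes f: "admissible L f" and g: "admissible L g" and L_pos: "\<And>k. L$k > 0"
  shows "integral (cbox 0 L) (\<lambda>x. lap f x * g x) = integral (cbox 0 L) (\<lambda>x. f x * lap g x)"
proof -
  have integrable: "(\<lambda>x. u x * w x) integrable_on cbox 0 L" if "admissible L u" "admissible L w"
    for u w :: "real^'n \<Rightarrow> 'b"
    using that by (intro integrable_on_cbox_if_continuous admissible_continuous admissible_mult)
  have "integral (cbox 0 L) (\<lambda>x. lap f x * g x) = (\<Sum>k\<in>UNIV. integral (cbox 0 L) (\<lambda>x. pd k (pd k f) x * g x))"
    unfolding lap_def sum_distrib_right
    by (rule integral_sum) (auto intro!: integrable admissible_pd f g)
  also have "\<dots> = (\<Sum>k\<in>UNIV. integral (cbox 0 L) (\<lambda>x. f x * pd k (pd k g) x))"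
    using integral_pd_mult_periodic[OF admissible_pd[OF f] g L_pos]
      integral_pd_mult_periodic[OF f admissible_pd[OF g] L_pos]
    by simp
  also have "\<dots> = integral (cbox 0 L) (\<lambda>x. f x * lap g x)"
    unfolding lap_def sum_distrib_left
    by (rule integral_sum[symmetric]) (auto intro!: integrable admissible_pd f g)
  finally show ?thesis .
qed

lemma ipc_lap_swap:
  assumes "admissible L f" "admissible L g" "\<And>k. L$k > 0"
  shows "ipc L (lap f) g = ipc L f (lap g)"
  unfolding ipc_def
  using integral_lap_mult_periodic[OF assms(1) admissible_cnj[OF assms(2)] assms(3)] lap_cnj[OF assms(2)]
  by simp

lemma ipr_lap_swap:
  assumes "admissible L f" "admissible L g" "\<And>k. L$k > 0"
  shows "ipr L (lap f) g = ipr L f (lap g)"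
  unfolding ipr_def by (rule integral_lap_mult_periodic[OF assms])

section \<open>Symplectic Runge--Kutta methods and bilinear forms\<close>

lemma symplectic_double_sum:
  fixes M :: "nat \<Rightarrow> nat \<Rightarrow> 'w::real_vector"
  assumes sympl: "\<forall>i\<in>{1..s}. \<forall>j\<in>{1..s}. b i * a i j + b j * a j i = b i * b j"
  shows "(\<Sum>i=1..s. \<Sum>j=1..s. (b i * b j) *\<^sub>R M i j)
       = (\<Sum>i=1..s. b i *\<^sub>R (\<Sum>j=1..s. a i j *\<^sub>R (M i j + M j i)))"
proof -
  have "(\<Sum>i=1..s. \<Sum>j=1..s. (b i * b j) *\<^sub>R M i j)
      = (\<Sum>i=1..s. \<Sum>j=1..s. (b i * a i j) *\<^sub>R M i j) + (\<Sum>i=1..s. \<Sum>j=1..s. (b j * a j i) *\<^sub>R M i j)"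
    using sympl by (simp flip: sum.distrib scaleR_add_left)
  also have "(\<Sum>i=1..s. \<Sum>j=1..s. (b j * a j i) *\<^sub>R M i j) = (\<Sum>i=1..s. \<Sum>j=1..s. (b i * a i j) *\<^sub>R M j i)"
    by (rule sum.swap)
  finally show ?thesis
    by (simp add: scaleR_add_right scaleR_sum_right sum.distrib)
qed

text \<open>Bilinearity is only asked for on the linear space of functions singled out by \<open>P\<close>:
  an integral is additive only on integrable functions.\<close>

locale bilinear_on =
  fixes P :: "('a \<Rightarrow> 'b::real_vector) \<Rightarrow> bool"
    and B :: "('a \<Rightarrow> 'b) \<Rightarrow> ('a \<Rightarrow> 'b) \<Rightarrow> 'c::real_vector"
  assumes zero_closed: "P (\<lambda>x. 0)"
    and add_closed: "P f \<Longrightarrow> P g \<Longrightarrow> P (\<lambda>x. f x + g x)"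
    and scaleR_closed: "P f \<Longrightarrow> P (\<lambda>x. c *\<^sub>R f x)"
    and add_left: "P f \<Longrightarrow> P g \<Longrightarrow> P h \<Longrightarrow> B (\<lambda>x. f x + g x) h = B f h + B g h"
    and scaleR_left: "P f \<Longrightarrow> P h \<Longrightarrow> B (\<lambda>x. c *\<^sub>R f x) h = c *\<^sub>R B f h"
    and add_right: "P h \<Longrightarrow> P f \<Longrightarrow> P g \<Longrightarrow> B h (\<lambda>x. f x + g x) = B h f + B h g"
    and scaleR_right: "P h \<Longrightarrow> P f \<Longrightarrow> B h (\<lambda>x. c *\<^sub>R f x) = c *\<^sub>R B h f"
begin

lemma lincomb_closed:
  "finite A \<Longrightarrow> (\<And>i. i \<in> A \<Longrightarrow> P (f i)) \<Longrightarrow> P (\<lambda>x. \<Sum>i\<in>A. c i *\<^sub>R f i x)"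
  by (induction A rule: finite_induct) (simp_all add: zero_closed add_closed scaleR_closed)

lemma lincomb_left:
  "finite A \<Longrightarrow> (\<And>i. i \<in> A \<Longrightarrow> P (f i)) \<Longrightarrow> P h
    \<Longrightarrow> B (\<lambda>x. \<Sum>i\<in>A. c i *\<^sub>R f i x) h = (\<Sum>i\<in>A. c i *\<^sub>R B (f i) h)"
proof (induction A rule: finite_induct)
  case empty
  then show ?case using scaleR_left[OF zero_closed, of h 0] by simp
qed (simp add: add_left scaleR_left scaleR_closed lincomb_closed)

lemma lincomb_right:
  "finite A \<Longrightarrow> (\<And>i. i \<in> A \<Longrightarrow> P (f i)) \<Longrightarrow> P h
    \<Longrightarrow> B h (\<lambda>x. \<Sum>i\<in>A. c i *\<^sub>R f i x) = (\<Sum>i\<in>A. c i *\<^sub>R B h (f i))"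
proof (induction A rule: finite_induct)
  case empty
  then show ?case using scaleR_right[OF _ zero_closed, of h 0] by simp
qed (simp add: add_right scaleR_right scaleR_closed lincomb_closed)

lemma step_closed:
  fixes s :: nat
  assumes "P y" "\<And>i. i \<in> {1..s} \<Longrightarrow> P (k i)"
  shows "P (\<lambda>x. y x + \<tau> *\<^sub>R (\<Sum>i=1..s. c i *\<^sub>R k i x))"
  using assms by (intro add_closed scaleR_closed lincomb_closed) auto

lemma step_left:
  fixes s :: nat
  assumes y: "P y" and k: "\<And>i. i \<in> {1..s} \<Longrightarrow> P (k i)" and h: "P h"
  shows "B (\<lambda>x. y x + \<tau> *\<^sub>R (\<Sum>i=1..s. c i *\<^sub>R k i x)) h = B y h + \<tau> *\<^sub>R (\<Sum>i=1..s. c i *\<^sub>R B (k i) h)"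
proof -
  have K: "P (\<lambda>x. \<Sum>i=1..s. c i *\<^sub>R k i x)"
    using k by (intro lincomb_closed) auto
  then show ?thesis
    using add_left[OF y scaleR_closed[OF K] h] scaleR_left[OF K h] lincomb_left[of "{1..s}" k h c] k h
    by simp
qed

lemma step_right:
  fixes s :: nat
  assumes h: "P h" and y: "P y" and k: "\<And>i. i \<in> {1..s} \<Longrightarrow> P (k i)"
  shows "B h (\<lambda>x. y x + \<tau> *\<^sub>R (\<Sum>i=1..s. c i *\<^sub>R k i x)) = B h y + \<tau> *\<^sub>R (\<Sum>i=1..s. c i *\<^sub>R B h (k i))"
proof -
  have K: "P (\<lambda>x. \<Sum>i=1..s. c i *\<^sub>R k i x)"
    using k by (intro lincomb_closed) auto
  then show ?thesis
    using add_right[OF h y scaleR_closed[OF K]] scaleR_right[OF h K] lincomb_right[of "{1..s}" k h c] k h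
    by simp
qed

theorem symplectic_rk_increment:
  fixes s :: nat
  assumes sympl: "\<forall>i\<in>{1..s}. \<forall>j\<in>{1..s}. b i * a i j + b j * a j i = b i * b j"
    and y0: "P y0" and z0: "P z0"
    and k: "\<And>i. i \<in> {1..s} \<Longrightarrow> P (k i)" and l: "\<And>i. i \<in> {1..s} \<Longrightarrow> P (l i)"
    and Y: "\<And>i. i \<in> {1..s} \<Longrightarrow> Y i = (\<lambda>x. y0 x + \<tau> *\<^sub>R (\<Sum>j=1..s. a i j *\<^sub>R k j x))"
    and Z: "\<And>i. i \<in> {1..s} \<Longrightarrow> Z i = (\<lambda>x. z0 x + \<tau> *\<^sub>R (\<Sum>j=1..s. a i j *\<^sub>R l j x))"
    and y1: "y1 = (\<lambda>x. y0 x + \<tau> *\<^sub>R (\<Sum>i=1..s. b i *\<^sub>R k i x))"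
    and z1: "z1 = (\<lambda>x. z0 x + \<tau> *\<^sub>R (\<Sum>i=1..s. b i *\<^sub>R l i x))"
  shows "B y1 z1 - B y0 z0 = \<tau> *\<^sub>R (\<Sum>i=1..s. b i *\<^sub>R (B (Y i) (l i) + B (k i) (Z i)))"
proof -
  define M where "M i j = B (k i) (l j)" for i j
  have P_z1: "P z1"
    unfolding z1 by (rule step_closed[OF z0 l])
  have "(\<Sum>i=1..s. b i *\<^sub>R B (k i) z1)
      = (\<Sum>i=1..s. b i *\<^sub>R B (k i) z0) + \<tau> *\<^sub>R (\<Sum>i=1..s. \<Sum>j=1..s. (b i * b j) *\<^sub>R M i j)"
    unfolding z1 M_def using step_right[OF k z0 l]
    by (simp add: scaleR_add_right sum.distrib scaleR_sum_right mult.left_commute)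
  then have lhs: "B y1 z1 - B y0 z0
      = \<tau> *\<^sub>R (\<Sum>i=1..s. b i *\<^sub>R (B y0 (l i) + B (k i) z0))
        + (\<tau> * \<tau>) *\<^sub>R (\<Sum>i=1..s. \<Sum>j=1..s. (b i * b j) *\<^sub>R M i j)"
    unfolding y1 using step_left[OF y0 k P_z1] step_right[OF y0 z0 l]
    by (simp add: z1 scaleR_add_right sum.distrib)
  have "B (Y i) (l i) + B (k i) (Z i)
      = B y0 (l i) + B (k i) z0 + \<tau> *\<^sub>R (\<Sum>j=1..s. a i j *\<^sub>R (M i j + M j i))" if "i \<in> {1..s}" for i
    unfolding Y[OF that] Z[OF that] M_def
    using step_left[OF y0 k l[OF that]] step_right[OF k[OF that] z0 l]
    by (simp add: scaleR_add_right sum.distrib)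
  then have "\<tau> *\<^sub>R (\<Sum>i=1..s. b i *\<^sub>R (B (Y i) (l i) + B (k i) (Z i)))
      = \<tau> *\<^sub>R (\<Sum>i=1..s. b i *\<^sub>R (B y0 (l i) + B (k i) z0))
        + (\<tau> * \<tau>) *\<^sub>R (\<Sum>i=1..s. b i *\<^sub>R (\<Sum>j=1..s. a i j *\<^sub>R (M i j + M j i)))"
    by (simp add: scaleR_add_right sum.distrib scaleR_sum_right mult_ac)
  with lhs show ?thesis
    unfolding symplectic_double_sum[OF sympl] by simp
qed

end

lemma bilinear_on_pointwise: "bilinear_on (\<lambda>_. True) (\<lambda>f g. Re (f x * cnj (g x)))"
  by unfold_locales (simp_all add: algebra_simps)

lemma bilinear_on_ipc: "bilinear_on (\<lambda>f. continuous_on UNIV f) (ipc L)"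
  by unfold_locales
    (simp_all add: ipc_def distrib_left distrib_right continuous_on_add continuous_on_scaleR
      integral_add integrable_on_cbox_if_continuous continuous_intros)

lemma bilinear_on_ipr: "bilinear_on (\<lambda>f. continuous_on UNIV f) (ipr L)"
  by unfold_locales
    (simp_all add: ipr_def distrib_left distrib_right continuous_on_add continuous_on_scaleR
      integral_add integrable_on_cbox_if_continuous continuous_intros del: real_scaleR_def)

lemma bilinear_on_admissible:
  assumes "bilinear_on (\<lambda>f. continuous_on UNIV f) B"
  shows "bilinear_on (admissible L) B"
proof -
  interpret bilinear_on "\<lambda>f. continuous_on UNIV f" B by fact
  show ?thesis
    by unfold_locales
      (simp_all add: admissible_continuous admissible_const admissible_add admissible_scaleR
        add_left scaleR_left add_right scaleR_right)
qed

lemma bilinear_on_lap_left: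
  assumes "bilinear_on (admissible L) B"
  shows "bilinear_on (admissible L) (\<lambda>f g. B (lap f) g)"
proof -
  interpret bilinear_on "admissible L" B by fact
  show ?thesis
    by unfold_locales
      (simp_all add: zero_closed add_closed scaleR_closed admissible_lap lap_add lap_scaleR
        add_left scaleR_left add_right scaleR_right)
qed

lemma bilinear_on_lap_right:
  assumes "bilinear_on (admissible L) B"
  shows "bilinear_on (admissible L) (\<lambda>f g. B f (lap g))"
proof -
  interpret bilinear_on "admissible L" B by fact
  show ?thesis
    by unfold_locales
      (simp_all add: zero_closed add_closed scaleR_closed admissible_lap lap_add lap_scaleR
        add_left scaleR_left add_right scaleR_right)
qed

lemma admissible_K1: "admissible L E \<Longrightarrow> admissible L N \<Longrightarrow> admissible L (K1 \<epsilon> E N)"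
  unfolding K1_def by (intro admissible_cmult admissible_diff admissible_lap admissible_mult admissible_of_real)

lemma admissible_K2: "admissible L v \<Longrightarrow> admissible L (K2 v)"
  unfolding K2_def by (rule admissible_lap)

lemma admissible_K3: "admissible L N \<Longrightarrow> admissible L Q \<Longrightarrow> admissible L (K3 \<epsilon> N Q)"
  unfolding K3_def by (intro admissible_add admissible_diff admissible_cmult admissible_lap)

lemma admissible_K4: "admissible L E \<Longrightarrow> admissible L N \<Longrightarrow> admissible L (K4 \<epsilon> E N)"
  unfolding K4_def
  by (intro admissible_cmult admissible_linear[OF bounded_linear_Re] admissible_mult admissible_cnj
      admissible_K1)

lemma K4_eq: "K4 \<epsilon> E N x = Re (E x * cnj (K1 \<epsilon> E N x)) + Re (K1 \<epsilon> E N x * cnj (E x))"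
  unfolding K4_def by simp

lemma mass_eq_ipc: "mass L E = ipc L E E"
  unfolding mass_def ipc_def by (simp flip: complex_norm_square)

lemma integral_cbox_add:
  "continuous_on UNIV f \<Longrightarrow> continuous_on UNIV g \<Longrightarrow>
    integral (cbox a b) (\<lambda>x. f x + g x) = integral (cbox a b) f + integral (cbox a b) (g::real^'n::finite \<Rightarrow> 'b::banach)"
  by (intro integral_add integrable_on_cbox_if_continuous)

lemma integral_cbox_diff:
  "continuous_on UNIV f \<Longrightarrow> continuous_on UNIV g \<Longrightarrow>
    integral (cbox a b) (\<lambda>x. f x - g x) = integral (cbox a b) f - integral (cbox a b) (g::real^'n::finite \<Rightarrow> 'b::banach)"
  by (intro integral_diff integrable_on_cbox_if_continuous)

text \<open>The mass rate vanishes because \<open>\<Delta>\<close> and \<open>\<Delta>\<^sup>2\<close> are self-adjoint and \<open>N\<close> is real.\<close>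

lemma ipc_K1_antisym:
  fixes E :: "real^'n::finite \<Rightarrow> complex" and N :: "real^'n \<Rightarrow> real"
  assumes E: "admissible L E" and N: "admissible L N" and L_pos: "\<And>k. L$k > 0"
  shows "ipc L E (K1 \<epsilon> E N) + ipc L (K1 \<epsilon> E N) E = 0"
proof -
  define k where "k = K1 \<epsilon> E N"
  have cont: "continuous_on UNIV E" "continuous_on UNIV (lap E)" "continuous_on UNIV (lap (lap E))"
      "continuous_on UNIV k"
    using E N unfolding k_def by (auto intro: admissible_continuous admissible_lap admissible_K1)
  have "ipc L E k + ipc L k E = integral (cbox 0 L) (\<lambda>x. E x * cnj (k x) + k x * cnj (E x))"
    unfolding ipc_def using cont by (simp add: integral_cbox_add continuous_intros)
  also have "\<dots> = integral (cbox 0 L) (\<lambda>x. \<i> * (lap E x * cnj (E x) - E x * cnj (lap E x))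
        - \<i> * of_real (\<epsilon>^2) * (lap (lap E) x * cnj (E x) - E x * cnj (lap (lap E) x)))"
    unfolding k_def K1_def
    by (intro arg_cong[where f="integral (cbox 0 L)"] ext) (simp add: complex_eq_iff algebra_simps)
  also have "\<dots> = \<i> * (ipc L (lap E) E - ipc L E (lap E))
      - \<i> * of_real (\<epsilon>^2) * (ipc L (lap (lap E)) E - ipc L E (lap (lap E)))"
    unfolding ipc_def using cont by (simp add: integral_cbox_diff continuous_intros)
  also have "\<dots> = 0"
    using ipc_lap_swap[OF E E L_pos] ipc_lap_swap[OF admissible_lap[OF E] E L_pos]
      ipc_lap_swap[OF E admissible_lap[OF E] L_pos]
    by simp
  finally show ?thesis unfolding k_def .
qed

text \<open>At a single stage, the terms of the energy involving \<open>E\<close> and those involving \<open>N, v, q\<close>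
  change at the opposite rates \<open>\<plusminus>(N, k\<^sub>4)\<close>: this is energy conservation of the continuous flow.\<close>

lemma ipc_K1_energy_rate:
  fixes E :: "real^'n::finite \<Rightarrow> complex" and N :: "real^'n \<Rightarrow> real"
  assumes E: "admissible L E" and N: "admissible L N" and L_pos: "\<And>k. L$k > 0"
  shows "ipc L (lap E) (K1 \<epsilon> E N) + ipc L (lap (K1 \<epsilon> E N)) E
     - of_real (\<epsilon>^2) * (ipc L (lap E) (lap (K1 \<epsilon> E N)) + ipc L (lap (K1 \<epsilon> E N)) (lap E))
     = of_real (ipr L N (K4 \<epsilon> E N))"
proof -
  define k where "k = K1 \<epsilon> E N"
  have k: "admissible L k"
    unfolding k_def by (rule admissible_K1[OF E N])
  have cont: "continuous_on UNIV E" "continuous_on UNIV (lap E)" "continuous_on UNIV (lap (lap E))"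
      "continuous_on UNIV k" "continuous_on UNIV N" "continuous_on UNIV (K4 \<epsilon> E N)"
    using E N k by (auto intro: admissible_continuous admissible_lap admissible_K4)
  have "ipc L (lap E) k + ipc L (lap k) E - of_real (\<epsilon>^2) * (ipc L (lap E) (lap k) + ipc L (lap k) (lap E))
      = ipc L (lap E) k + ipc L k (lap E) - of_real (\<epsilon>^2) * (ipc L (lap (lap E)) k + ipc L k (lap (lap E)))"
    using ipc_lap_swap[OF k E L_pos] ipc_lap_swap[OF admissible_lap[OF E] k L_pos]
      ipc_lap_swap[OF k admissible_lap[OF E] L_pos]
    by simp
  also have "\<dots> = integral (cbox 0 L) (\<lambda>x. (lap E x * cnj (k x) + k x * cnj (lap E x))
      - of_real (\<epsilon>^2) * (lap (lap E) x * cnj (k x) + k x * cnj (lap (lap E) x)))"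
    unfolding ipc_def using cont by (simp add: integral_cbox_diff integral_cbox_add continuous_intros)
  also have "\<dots> = integral (cbox 0 L) (\<lambda>x. of_real (N x * K4 \<epsilon> E N x))"
    unfolding k_def K4_def K1_def
    by (intro arg_cong[where f="integral (cbox 0 L)"] ext) (simp add: complex_eq_iff algebra_simps)
  also have "\<dots> = of_real (ipr L N (K4 \<epsilon> E N))"
    unfolding ipr_def using cont
    by (intro integral_unique has_integral_of_real integrable_integral integrable_on_cbox_if_continuous
        continuous_intros)
  finally show ?thesis unfolding k_def .
qed

lemma ipr_K2_K3_energy_rate:
  fixes N V Q k4 :: "real^'n::finite \<Rightarrow> real"
  assumes N: "admissible L N" and V: "admissible L V" and Q: "admissible L Q"
    and k4: "continuous_on UNIV k4" and L_pos: "\<And>k. L$k > 0"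
  shows "- (1/2) * (ipr L N (K2 V) + ipr L (K2 V) N)
     + \<epsilon>^2/2 * (ipr L (lap N) (K2 V) + ipr L (lap (K2 V)) N)
     - (ipr L N k4 + ipr L (K2 V) Q)
     + 1/2 * (ipr L (lap V) (K3 \<epsilon> N Q) + ipr L (lap (K3 \<epsilon> N Q)) V)
     = - ipr L N k4"
proof -
  define k2 where "k2 = K2 V"
  define k3 where "k3 = K3 \<epsilon> N Q"
  have k2: "admissible L k2" and k3: "admissible L k3"
    unfolding k2_def k3_def by (intro admissible_K2 admissible_K3 V N Q)+
  have cont: "continuous_on UNIV N" "continuous_on UNIV (lap N)" "continuous_on UNIV V"
      "continuous_on UNIV (lap V)" "continuous_on UNIV Q" "continuous_on UNIV k2" "continuous_on UNIV k3"
    using N V Q k2 k3 by (auto intro: admissible_continuous admissible_lap)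
  have "- (1/2) * (ipr L N k2 + ipr L k2 N) + \<epsilon>^2/2 * (ipr L (lap N) k2 + ipr L (lap k2) N)
      - (ipr L N k4 + ipr L k2 Q) + 1/2 * (ipr L (lap V) k3 + ipr L (lap k3) V)
      = - ipr L N k2 + \<epsilon>^2 * ipr L (lap N) k2 - (ipr L N k4 + ipr L k2 Q) + ipr L (lap V) k3"
    using ipr_lap_swap[OF k2 N L_pos] ipr_lap_swap[OF k3 V L_pos]
    unfolding ipr_def by (simp add: mult.commute)
  also have "\<dots> = integral (cbox 0 L)
      (\<lambda>x. - (N x * k2 x) + \<epsilon>^2 * (lap N x * k2 x) - (N x * k4 x + k2 x * Q x) + lap V x * k3 x)"
    unfolding ipr_def using cont k4 by (simp add: integral_cbox_diff integral_cbox_add continuous_intros)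
  also have "\<dots> = integral (cbox 0 L) (\<lambda>x. - (N x * k4 x))"
    unfolding k2_def k3_def K2_def K3_def
    by (intro arg_cong[where f="integral (cbox 0 L)"] ext) (simp add: algebra_simps)
  also have "\<dots> = - ipr L N k4"
    unfolding ipr_def by simp
  finally show ?thesis unfolding k2_def k3_def .
qed

section \<open>One step of the scheme\<close>

locale rk_step =
  fixes L :: "real^'d::finite" and \<epsilon> \<tau> :: real and s :: nat
    and a :: "nat \<Rightarrow> nat \<Rightarrow> real" and b :: "nat \<Rightarrow> real"
    and E0 E1 :: "real^'d \<Rightarrow> complex" and N0 N1 v0 v1 q0 q1 :: "real^'d \<Rightarrow> real"
    and Es :: "nat \<Rightarrow> real^'d \<Rightarrow> complex" and Ns Vs Qs :: "nat \<Rightarrow> real^'d \<Rightarrow> real"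
  assumes L_pos: "\<And>k. L$k > 0"
    and sympl: "\<forall>i\<in>{1..s}. \<forall>j\<in>{1..s}. b i * a i j + b j * a j i = b i * b j"
    and admissible_data: "admissible L E0" "admissible L N0" "admissible L v0" "admissible L q0"
    and admissible_stages: "\<forall>i\<in>{1..s}. admissible L (Es i) \<and> admissible L (Ns i)
                        \<and> admissible L (Vs i) \<and> admissible L (Qs i)"
    and stage_E: "\<forall>i\<in>{1..s}. Es i = (\<lambda>x. E0 x + complex_of_real \<tau> *
                     (\<Sum>j=1..s. complex_of_real (a i j) * K1 \<epsilon> (Es j) (Ns j) x))"
    and stage_N: "\<forall>i\<in>{1..s}. Ns i = (\<lambda>x. N0 x + \<tau> * (\<Sum>j=1..s. a i j * K2 (Vs j) x))"
    and stage_v: "\<forall>i\<in>{1..s}. Vs i = (\<lambda>x. v0 x + \<tau> * (\<Sum>j=1..s. a i j * K3 \<epsilon> (Ns j) (Qs j) x))"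
    and stage_q: "\<forall>i\<in>{1..s}. Qs i = (\<lambda>x. q0 x + \<tau> * (\<Sum>j=1..s. a i j * K4 \<epsilon> (Es j) (Ns j) x))"
    and update_E: "E1 = (\<lambda>x. E0 x + complex_of_real \<tau> *
                     (\<Sum>i=1..s. complex_of_real (b i) * K1 \<epsilon> (Es i) (Ns i) x))"
    and update_N: "N1 = (\<lambda>x. N0 x + \<tau> * (\<Sum>i=1..s. b i * K2 (Vs i) x))"
    and update_v: "v1 = (\<lambda>x. v0 x + \<tau> * (\<Sum>i=1..s. b i * K3 \<epsilon> (Ns i) (Qs i) x))"
    and update_q: "q1 = (\<lambda>x. q0 x + \<tau> * (\<Sum>i=1..s. b i * K4 \<epsilon> (Es i) (Ns i) x))"
begin

abbreviation "k1 i \<equiv> K1 \<epsilon> (Es i) (Ns i)"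
abbreviation "k2 i \<equiv> K2 (Vs i)"
abbreviation "k3 i \<equiv> K3 \<epsilon> (Ns i) (Qs i)"
abbreviation "k4 i \<equiv> K4 \<epsilon> (Es i) (Ns i)"

lemma admissible_stage:
  assumes "i \<in> {1..s}"
  shows "admissible L (Es i)" "admissible L (Ns i)" "admissible L (Vs i)" "admissible L (Qs i)"
    and "admissible L (k1 i)" "admissible L (k2 i)" "admissible L (k3 i)" "admissible L (k4 i)"
  using admissible_stages assms by (auto intro: admissible_K1 admissible_K2 admissible_K3 admissible_K4)

lemma stages_scaleR:
  assumes "i \<in> {1..s}"
  shows "Es i = (\<lambda>x. E0 x + \<tau> *\<^sub>R (\<Sum>j=1..s. a i j *\<^sub>R k1 j x))"
    and "Ns i = (\<lambda>x. N0 x + \<tau> *\<^sub>R (\<Sum>j=1..s. a i j *\<^sub>R k2 j x))"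
    and "Vs i = (\<lambda>x. v0 x + \<tau> *\<^sub>R (\<Sum>j=1..s. a i j *\<^sub>R k3 j x))"
    and "Qs i = (\<lambda>x. q0 x + \<tau> *\<^sub>R (\<Sum>j=1..s. a i j *\<^sub>R k4 j x))"
  by (subst stage_E[rule_format, OF assms] stage_N[rule_format, OF assms] stage_v[rule_format, OF assms]
      stage_q[rule_format, OF assms], simp add: scaleR_conv_of_real)+

lemma updates_scaleR:
  shows "E1 = (\<lambda>x. E0 x + \<tau> *\<^sub>R (\<Sum>i=1..s. b i *\<^sub>R k1 i x))"
    and "N1 = (\<lambda>x. N0 x + \<tau> *\<^sub>R (\<Sum>i=1..s. b i *\<^sub>R k2 i x))"
    and "v1 = (\<lambda>x. v0 x + \<tau> *\<^sub>R (\<Sum>i=1..s. b i *\<^sub>R k3 i x))"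
    and "q1 = (\<lambda>x. q0 x + \<tau> *\<^sub>R (\<Sum>i=1..s. b i *\<^sub>R k4 i x))"
  using update_E update_N update_v update_q by (simp_all add: scaleR_conv_of_real)

lemma q_minus_abs_sq_eq: "q1 x - (cmod (E1 x))^2 = q0 x - (cmod (E0 x))^2"
proof -
  have "Re (E1 x * cnj (E1 x)) - Re (E0 x * cnj (E0 x))
      = \<tau> *\<^sub>R (\<Sum>i=1..s. b i *\<^sub>R (Re (Es i x * cnj (k1 i x)) + Re (k1 i x * cnj (Es i x))))"
    by (rule bilinear_on.symplectic_rk_increment[OF bilinear_on_pointwise sympl _ _ _ _
          stages_scaleR(1) stages_scaleR(1) updates_scaleR(1) updates_scaleR(1)]) auto
  then show ?thesis
    unfolding updates_scaleR(4) K4_eq cmod_power2 by (simp add: power2_eq_square)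
qed

lemma mass_eq: "mass L E1 = mass L E0"
proof -
  have "ipc L E1 E1 - ipc L E0 E0 = \<tau> *\<^sub>R (\<Sum>i=1..s. b i *\<^sub>R (ipc L (Es i) (k1 i) + ipc L (k1 i) (Es i)))"
    by (rule bilinear_on.symplectic_rk_increment[OF bilinear_on_admissible[OF bilinear_on_ipc] sympl
          admissible_data(1) admissible_data(1) admissible_stage(5) admissible_stage(5)
          stages_scaleR(1) stages_scaleR(1) updates_scaleR(1) updates_scaleR(1)])
  also have "\<dots> = 0"
    by (simp add: ipc_K1_antisym[OF admissible_stage(1,2) L_pos])
  finally show ?thesis
    unfolding mass_eq_ipc by simp
qed

lemma energy_E_terms_increment:
  "(ipc L (lap E1) E1 - ipc L (lap E0) E0) - of_real (\<epsilon>^2) * (ipc L (lap E1) (lap E1) - ipc L (lap E0) (lap E0))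
    = of_real (\<tau> * (\<Sum>i=1..s. b i * ipr L (Ns i) (k4 i)))"
proof -
  note ipc_lap = bilinear_on_lap_left[OF bilinear_on_admissible[OF bilinear_on_ipc]]
  note E_steps = sympl admissible_data(1) admissible_data(1) admissible_stage(5) admissible_stage(5)
    stages_scaleR(1) stages_scaleR(1) updates_scaleR(1) updates_scaleR(1)
  have A: "ipc L (lap E1) E1 - ipc L (lap E0) E0
      = \<tau> *\<^sub>R (\<Sum>i=1..s. b i *\<^sub>R (ipc L (lap (Es i)) (k1 i) + ipc L (lap (k1 i)) (Es i)))"
    by (rule bilinear_on.symplectic_rk_increment[OF ipc_lap E_steps])
  have B: "ipc L (lap E1) (lap E1) - ipc L (lap E0) (lap E0)
      = \<tau> *\<^sub>R (\<Sum>i=1..s. b i *\<^sub>R (ipc L (lap (Es i)) (lap (k1 i)) + ipc L (lap (k1 i)) (lap (Es i))))"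
    by (rule bilinear_on.symplectic_rk_increment[OF bilinear_on_lap_right[OF ipc_lap] E_steps])
  have "(ipc L (lap E1) E1 - ipc L (lap E0) E0) - of_real (\<epsilon>^2) * (ipc L (lap E1) (lap E1) - ipc L (lap E0) (lap E0))
      = \<tau> *\<^sub>R (\<Sum>i=1..s. b i *\<^sub>R (ipc L (lap (Es i)) (k1 i) + ipc L (lap (k1 i)) (Es i)
          - of_real (\<epsilon>^2) * (ipc L (lap (Es i)) (lap (k1 i)) + ipc L (lap (k1 i)) (lap (Es i)))))"
    unfolding A B by (simp add: scaleR_diff_right sum_subtractf mult_scaleR_right sum_distrib_left)
  also have "\<dots> = \<tau> *\<^sub>R (\<Sum>i=1..s. b i *\<^sub>R of_real (ipr L (Ns i) (k4 i)))"
    by (intro arg_cong[where f="\<lambda>S. \<tau> *\<^sub>R S"] sum.cong refl arg_cong[where f="\<lambda>z. b i *\<^sub>R z" for i]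
        ipc_K1_energy_rate admissible_stage L_pos) simp_all
  finally show ?thesis
    by (simp add: scaleR_conv_of_real sum_distrib_left mult.assoc)
qed

lemma energy_NVq_terms_increment:
  "- (1/2) * (ipr L N1 N1 - ipr L N0 N0) + \<epsilon>^2/2 * (ipr L (lap N1) N1 - ipr L (lap N0) N0)
      - (ipr L N1 q1 - ipr L N0 q0) + 1/2 * (ipr L (lap v1) v1 - ipr L (lap v0) v0)
    = - (\<tau> * (\<Sum>i=1..s. b i * ipr L (Ns i) (k4 i)))"
proof -
  note ipr = bilinear_on_admissible[OF bilinear_on_ipr]
  note N_steps = sympl admissible_data(2) admissible_data(2) admissible_stage(6) admissible_stage(6)
    stages_scaleR(2) stages_scaleR(2) updates_scaleR(2) updates_scaleR(2)
  note Nq_steps = sympl admissible_data(2,4) admissible_stage(6,8) stages_scaleR(2,4) updates_scaleR(2,4)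
  note v_steps = sympl admissible_data(3) admissible_data(3) admissible_stage(7) admissible_stage(7)
    stages_scaleR(3) stages_scaleR(3) updates_scaleR(3) updates_scaleR(3)
  have C: "ipr L N1 N1 - ipr L N0 N0 = \<tau> * (\<Sum>i=1..s. b i * (ipr L (Ns i) (k2 i) + ipr L (k2 i) (Ns i)))"
    using bilinear_on.symplectic_rk_increment[OF ipr N_steps] by simp
  have D: "ipr L (lap N1) N1 - ipr L (lap N0) N0
      = \<tau> * (\<Sum>i=1..s. b i * (ipr L (lap (Ns i)) (k2 i) + ipr L (lap (k2 i)) (Ns i)))"
    using bilinear_on.symplectic_rk_increment[OF bilinear_on_lap_left[OF ipr] N_steps] by simp
  have F: "ipr L N1 q1 - ipr L N0 q0 = \<tau> * (\<Sum>i=1..s. b i * (ipr L (Ns i) (k4 i) + ipr L (k2 i) (Qs i)))"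
    using bilinear_on.symplectic_rk_increment[OF ipr Nq_steps] by simp
  have G: "ipr L (lap v1) v1 - ipr L (lap v0) v0
      = \<tau> * (\<Sum>i=1..s. b i * (ipr L (lap (Vs i)) (k3 i) + ipr L (lap (k3 i)) (Vs i)))"
    using bilinear_on.symplectic_rk_increment[OF bilinear_on_lap_left[OF ipr] v_steps] by simp
  have "- (1/2) * (ipr L N1 N1 - ipr L N0 N0) + \<epsilon>^2/2 * (ipr L (lap N1) N1 - ipr L (lap N0) N0)
      - (ipr L N1 q1 - ipr L N0 q0) + 1/2 * (ipr L (lap v1) v1 - ipr L (lap v0) v0)
      = \<tau> * (\<Sum>i=1..s. b i * (- (1/2) * (ipr L (Ns i) (k2 i) + ipr L (k2 i) (Ns i))
          + \<epsilon>^2/2 * (ipr L (lap (Ns i)) (k2 i) + ipr L (lap (k2 i)) (Ns i))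
          - (ipr L (Ns i) (k4 i) + ipr L (k2 i) (Qs i))
          + 1/2 * (ipr L (lap (Vs i)) (k3 i) + ipr L (lap (k3 i)) (Vs i))))"
    unfolding C D F G by (simp add: ring_distribs sum_distrib_left sum.distrib sum_subtractf sum_negf mult_ac)
  also have "\<dots> = \<tau> * (\<Sum>i=1..s. b i * - ipr L (Ns i) (k4 i))"
    by (intro arg_cong[where f="\<lambda>S. \<tau> * S"] sum.cong refl arg_cong[where f="\<lambda>r. b i * r" for i]
        ipr_K2_K3_energy_rate admissible_stage admissible_continuous[where L=L] L_pos) simp_all
  finally show ?thesis
    by (simp add: sum_negf)
qed

lemma energy_eq: "energy \<epsilon> L E1 N1 v1 q1 = energy \<epsilon> L E0 N0 v0 q0"
proof -
  have "energy \<epsilon> L E1 N1 v1 q1 - energy \<epsilon> L E0 N0 v0 q0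
      = ((ipc L (lap E1) E1 - ipc L (lap E0) E0)
          - of_real (\<epsilon>^2) * (ipc L (lap E1) (lap E1) - ipc L (lap E0) (lap E0)))
        + of_real (- (1/2) * (ipr L N1 N1 - ipr L N0 N0) + \<epsilon>^2/2 * (ipr L (lap N1) N1 - ipr L (lap N0) N0)
          - (ipr L N1 q1 - ipr L N0 q0) + 1/2 * (ipr L (lap v1) v1 - ipr L (lap v0) v0))"
    unfolding energy_def by (simp add: algebra_simps)
  also have "\<dots> = 0"
    unfolding energy_E_terms_increment energy_NVq_terms_increment by simp
  finally show ?thesis by simp
qed

end

theorem theorem3p1:
  fixes L :: "real^'d" and \<epsilon> \<tau> :: real and s :: nat
    and a :: "nat \<Rightarrow> nat \<Rightarrow> real" and b :: "nat \<Rightarrow> real"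
    and E :: "nat \<Rightarrow> real^'d \<Rightarrow> complex"
    and N v q :: "nat \<Rightarrow> real^'d \<Rightarrow> real"
    and EE :: "nat \<Rightarrow> nat \<Rightarrow> real^'d \<Rightarrow> complex"
    and NN VV QQ :: "nat \<Rightarrow> nat \<Rightarrow> real^'d \<Rightarrow> real"
  assumes dim: "CARD('d) \<le> 2"
    and L_pos: "\<forall>k. L$k > 0"
    and eps: "\<epsilon> > 0" and tau: "\<tau> > 0"
    and sympl: "\<forall>i\<in>{1..s}. \<forall>j\<in>{1..s}. b i * a i j + b j * a j i = b i * b j"
    and reg: "\<forall>n. admissible L (E n) \<and> admissible L (N n) \<and> admissible L (v n) \<and> admissible L (q n)"
    and reg_stage: "\<forall>n. \<forall>i\<in>{1..s}. admissible L (EE n i) \<and> admissible L (NN n i)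
                        \<and> admissible L (VV n i) \<and> admissible L (QQ n i)"
    and stage_E: "\<forall>n. \<forall>i\<in>{1..s}. EE n i = (\<lambda>x. E n x + complex_of_real \<tau> *
                     (\<Sum>j=1..s. complex_of_real (a i j) * K1 \<epsilon> (EE n j) (NN n j) x))"
    and stage_N: "\<forall>n. \<forall>i\<in>{1..s}. NN n i = (\<lambda>x. N n x + \<tau> * (\<Sum>j=1..s. a i j * K2 (VV n j) x))"
    and stage_v: "\<forall>n. \<forall>i\<in>{1..s}. VV n i = (\<lambda>x. v n x + \<tau> * (\<Sum>j=1..s. a i j * K3 \<epsilon> (NN n j) (QQ n j) x))"
    and stage_q: "\<forall>n. \<forall>i\<in>{1..s}. QQ n i = (\<lambda>x. q n x + \<tau> * (\<Sum>j=1..s. a i j * K4 \<epsilon> (EE n j) (NN n j) x))"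
    and upd_E: "\<forall>n. E (Suc n) = (\<lambda>x. E n x + complex_of_real \<tau> *
                     (\<Sum>i=1..s. complex_of_real (b i) * K1 \<epsilon> (EE n i) (NN n i) x))"
    and upd_N: "\<forall>n. N (Suc n) = (\<lambda>x. N n x + \<tau> * (\<Sum>i=1..s. b i * K2 (VV n i) x))"
    and upd_v: "\<forall>n. v (Suc n) = (\<lambda>x. v n x + \<tau> * (\<Sum>i=1..s. b i * K3 \<epsilon> (NN n i) (QQ n i) x))"
    and upd_q: "\<forall>n. q (Suc n) = (\<lambda>x. q n x + \<tau> * (\<Sum>i=1..s. b i * K4 \<epsilon> (EE n i) (NN n i) x))"
    and init: "q 0 = (\<lambda>x. (cmod (E 0 x))^2)"
  shows "\<forall>n. mass L (E (Suc n)) = mass L (E n)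
            \<and> (\<lambda>x. q n x - (cmod (E n x))^2) = (\<lambda>x. 0)
            \<and> energy \<epsilon> L (E (Suc n)) (N (Suc n)) (v (Suc n)) (q (Suc n))
              = energy \<epsilon> L (E n) (N n) (v n) (q n)"
proof -
  have step: "rk_step L \<epsilon> \<tau> s a b (E n) (E (Suc n)) (N n) (N (Suc n)) (v n) (v (Suc n)) (q n) (q (Suc n))
      (EE n) (NN n) (VV n) (QQ n)" for n
    unfolding rk_step_def
    using L_pos sympl reg reg_stage stage_E stage_N stage_v stage_q upd_E upd_N upd_v upd_q by blast
  have "(\<lambda>x. q n x - (cmod (E n x))^2) = (\<lambda>x. 0)" for n
  proof (induction n)
    case 0
    show ?case using init by simp
  next
    case (Suc n)
    then show ?case using rk_step.q_minus_abs_sq_eq[OF step] by (simp add: fun_eq_iff)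
  qed
  then show ?thesis
    using rk_step.mass_eq[OF step] rk_step.energy_eq[OF step] by blast
qed

end
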